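(* For all host types and all $s,s_1,s_2,s_3$ of the appropriate $\mathsf{sf}$ types, host functions $f,g$ and values $c,d$, the following hold up to bisimilarity $\sim$ (writing $s_1\ggg s_2$ for $\mathit{comp}\,s_1\,s_2$): (1) $\mathit{arr}\,\mathrm{id}\ggg s\sim s$; (2) $s\ggg\mathit{arr}\,\mathrm{id}\sim s$; (3) $(s_1\ggg s_2)\ggg s_3\sim s_1\ggg(s_2\ggg s_3)$; (4) $\mathit{arr}(g\circ f)\sim\mathit{arr}\,f\ggg\mathit{arr}\,g$; (5) $\mathit{first}\,s\ggg\mathit{arr}\,\pi_1\sim\mathit{arr}\,\pi_1\ggg s$; (6) $\mathit{first}\,s\ggg\mathit{arr}(\mathrm{id}\times f)\sim\mathit{arr}(\mathrm{id}\times f)\ggg\mathit{first}\,s$; (7) $\mathit{first}(\mathit{first}\,s)\ggg\mathit{arr}\,\mathit{assoc}\sim\mathit{arr}\,\mathit{assoc}\ggg\mathit{first}\,s$; (8) $\mathit{first}(\mathit{arr}\,f)\sim\mathit{arr}(f\times\mathrm{id})$; (9) $\mathit{first}(s_1\ggg s_2)\sim\mathit{first}\,s_1\ggg\mathit{first}\,s_2$; (10) $\mathit{loop}\,c\,(\mathit{first}\,s_1\ggg s_2)\sim s_1\ggg\mathit{loop}\,c\,s_2$; (11) $\mathit{loop}\,c\,(s_1\ggg\mathit{first}\,s_2)\sim\mathit{loop}\,c\,s_1\ggg s_2$; (12) $\mathit{loop}\,c\,(\mathit{loop}\,d\,s)\sim\mathit{loop}\,(c,d)\,(\mathit{arr}\,\mathit{unassoc}\ggg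 s\ggg\mathit{arr}\,\mathit{assoc})$. That is, $\mathit{arr},\mathit{comp},\mathit{first},\mathit{loop}$ form an arrow with loops (up to $\sim$).
   Context: Host language: types are sets, functions total, with binary products $A\times B$, projections $\pi_1,\pi_2$, and $f\times g=\lambda(x,y).(f x,g y)$, $\mathit{assoc}=\lambda((x,y),z).(x,(y,z))$, $\mathit{unassoc}=\lambda(x,(y,z)).((x,y),z)$. For types $A,B$, $\mathsf{sf}\,A\,B$ is the final-coalgebra (coinductive) type with $\mathsf{sf}\,A\,B\cong A\to(B\times\mathsf{sf}\,A\,B)$. Corecursive definitions: $\mathit{arr}\,f=\lambda x.(f\,x,\mathit{arr}\,f)$ for $f:A\to B$; $\mathit{comp}\,s_1\,s_2=\lambda a.(c,\mathit{comp}\,s_1'\,s_2')$ where $(b,s_1')=s_1\,a$ and $(c,s_2')=s_2\,b$; $\mathit{first}\,s=\lambda(x,z).((y,z),\mathit{first}\,s')$ where $(y,s')=s\,x$ (so $\mathit{first}:\mathsf{sf}\,A\,B\to\mathsf{sf}(A\times C)(B\times C)$); $\mathit{loop}\,v\,s=\lambda x.(y,\mathit{loop}\,v'\,s')$ where $((y,v'),s')=s\,(x,v)$, for $v:C$ and $s:\mathsf{sf}(A\times C)(B\times C)$, giving $\mathsf{sf}\,A\,B$. A relation $R$ on $\mathsf{sf}\,A\,B$ is a bisimulation if whenever $R\,s_1\,s_2$ and $s_1\,a=(b,s_1')$, then $s_2\,a=(b,s_2')$ for some $s_2'$ with $R\,s_1'\,s_2'$; bisimilarity $\sim$ is the largest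 bisimulation. *)

theory Defs
  imports Main
begin

codatatype ('a, 'b) sf = SF (run: "'a \<Rightarrow> 'b \<times> ('a, 'b) sf")

definition assoc :: "('a \<times> 'b) \<times> 'c \<Rightarrow> 'a \<times> ('b \<times> 'c)" where
  "assoc = (\<lambda>((x, y), z). (x, (y, z)))"

definition unassoc :: "'a \<times> ('b \<times> 'c) \<Rightarrow> ('a \<times> 'b) \<times> 'c" where
  "unassoc = (\<lambda>(x, (y, z)). ((x, y), z))"

primcorec arr :: "('a \<Rightarrow> 'b) \<Rightarrow> ('a, 'b) sf" where
  "run (arr f) = (\<lambda>x. (f x, arr f))"

primcorec comp :: "('a, 'b) sf \<Rightarrow> ('b, 'c) sf \<Rightarrow> ('a, 'c) sf" where
  "run (comp s1 s2) = (\<lambda>a. (fst (run s2 (fst (run s1 a))),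
       comp (snd (run s1 a)) (snd (run s2 (fst (run s1 a))))))"

primcorec first :: "('a, 'b) sf \<Rightarrow> ('a \<times> 'c, 'b \<times> 'c) sf" where
  "run (first s) = (\<lambda>(x, z). ((fst (run s x), z), first (snd (run s x))))"

primcorec loop :: "'c \<Rightarrow> ('a \<times> 'c, 'b \<times> 'c) sf \<Rightarrow> ('a, 'b) sf" where
  "run (loop v s) = (\<lambda>x. (fst (fst (run s (x, v))),
       loop (snd (fst (run s (x, v)))) (snd (run s (x, v)))))"

definition bisimulation :: "(('a, 'b) sf \<Rightarrow> ('a, 'b) sf \<Rightarrow> bool) \<Rightarrow> bool" where
  "bisimulation R \<longleftrightarrow> (\<forall>s1 s2 a b s1'. R s1 s2 \<longrightarrow> run s1 a = (b, s1') \<longrightarrow>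
      (\<exists>s2'. run s2 a = (b, s2') \<and> R s1' s2'))"

definition bisim :: "('a, 'b) sf \<Rightarrow> ('a, 'b) sf \<Rightarrow> bool" (infix "\<sim>\<^sub>s\<^sub>f" 50) where
  "s1 \<sim>\<^sub>s\<^sub>f s2 \<longleftrightarrow> (\<exists>R. bisimulation R \<and> R s1 s2)"

end

theory Submission
  imports Defs
begin

text \<open>Since \<open>sf\<close> is a final coalgebra, each arrow law holds even as an equation, proved by
  coinduction; bisimilarity follows because equality is a bisimulation.\<close>

lemma bisim_refl: "s \<sim>\<^sub>s\<^sub>f s"
  unfolding bisim_def bisimulation_def by (rule exI[of _ "(=)"]) simp

lemma comp_arr_id_left: "comp (arr id) s = s"
  by (coinduction arbitrary: s) (auto simp: rel_fun_def rel_prod_sel)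

lemma comp_arr_id_right: "comp s (arr id) = s"
  by (coinduction arbitrary: s) (auto simp: rel_fun_def rel_prod_sel)

lemma comp_assoc: "comp (comp s1 s2) s3 = comp s1 (comp s2 s3)"
  by (coinduction arbitrary: s1 s2 s3) (auto simp: rel_fun_def)

lemma arr_compose: "arr (g \<circ> f) = comp (arr f) (arr g)"
  by coinduction (auto simp: rel_fun_def)

lemma comp_first_arr_fst: "comp (first s) (arr fst) = comp (arr fst) s"
  by (coinduction arbitrary: s) (auto simp: rel_fun_def split: prod.splits)

lemma comp_first_arr_map_prod_id:
  "comp (first s) (arr (map_prod id f)) = comp (arr (map_prod id f)) (first s)"
  by (coinduction arbitrary: s) (auto simp: rel_fun_def split: prod.splits)

lemma comp_first_first_arr_assoc: "comp (first (first s)) (arr assoc) = comp (arr assoc) (first s)"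
  by (coinduction arbitrary: s) (auto simp: rel_fun_def assoc_def split: prod.splits)

lemma first_arr: "first (arr f) = arr (map_prod f id)"
  by coinduction (auto simp: rel_fun_def split: prod.splits)

lemma first_comp: "first (comp s1 s2) = comp (first s1) (first s2)"
  by (coinduction arbitrary: s1 s2) (auto simp: rel_fun_def split: prod.splits)

lemma loop_comp_first_left: "loop c (comp (first s1) s2) = comp s1 (loop c s2)"
  by (coinduction arbitrary: c s1 s2) (auto simp: rel_fun_def split: prod.splits)

lemma loop_comp_first_right: "loop c (comp s1 (first s2)) = comp (loop c s1) s2"
  by (coinduction arbitrary: c s1 s2) (auto simp: rel_fun_def split: prod.splits)

lemma loop_loop: "loop c (loop d s) = loop (c, d) (comp (arr unassoc) (comp s (arr assoc)))"
  by (coinduction arbitrary: c d s)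
    (auto simp: rel_fun_def assoc_def unassoc_def split: prod.splits)

theorem theorem1:
  shows
  "(\<forall>s :: ('a, 'b) sf. comp (arr id) s \<sim>\<^sub>s\<^sub>f s)
 \<and> (\<forall>s :: ('a, 'b) sf. comp s (arr id) \<sim>\<^sub>s\<^sub>f s)
 \<and> (\<forall>(s1 :: ('a, 'b) sf) (s2 :: ('b, 'c) sf) (s3 :: ('c, 'd) sf).
       comp (comp s1 s2) s3 \<sim>\<^sub>s\<^sub>f comp s1 (comp s2 s3))
 \<and> (\<forall>(f :: 'a \<Rightarrow> 'b) (g :: 'b \<Rightarrow> 'c). arr (g \<circ> f) \<sim>\<^sub>s\<^sub>f comp (arr f) (arr g))
 \<and> (\<forall>s :: ('a, 'b) sf.
       comp (first s :: ('a \<times> 'c, 'b \<times> 'c) sf) (arr fst) \<sim>\<^sub>s\<^sub>f comp (arr fst) s)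
 \<and> (\<forall>(s :: ('a, 'b) sf) (f :: 'c \<Rightarrow> 'd).
       comp (first s) (arr (map_prod id f)) \<sim>\<^sub>s\<^sub>f comp (arr (map_prod id f)) (first s))
 \<and> (\<forall>s :: ('a, 'b) sf.
       comp (first (first s) :: (('a \<times> 'c) \<times> 'd, ('b \<times> 'c) \<times> 'd) sf) (arr assoc)
         \<sim>\<^sub>s\<^sub>f comp (arr assoc) (first s))
 \<and> (\<forall>f :: 'a \<Rightarrow> 'b. (first (arr f) :: ('a \<times> 'c, 'b \<times> 'c) sf) \<sim>\<^sub>s\<^sub>f arr (map_prod f id))
 \<and> (\<forall>(s1 :: ('a, 'b) sf) (s2 :: ('b, 'c) sf).
       (first (comp s1 s2) :: ('a \<times> 'd, 'c \<times> 'd) sf) \<sim>\<^sub>s\<^sub>f comp (first s1) (first s2))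
 \<and> (\<forall>(c :: 'c) (s1 :: ('a, 'b) sf) (s2 :: ('b \<times> 'c, 'd \<times> 'c) sf).
       loop c (comp (first s1) s2) \<sim>\<^sub>s\<^sub>f comp s1 (loop c s2))
 \<and> (\<forall>(c :: 'c) (s1 :: ('a \<times> 'c, 'b \<times> 'c) sf) (s2 :: ('b, 'd) sf).
       loop c (comp s1 (first s2)) \<sim>\<^sub>s\<^sub>f comp (loop c s1) s2)
 \<and> (\<forall>(c :: 'c) (d :: 'd) (s :: (('a \<times> 'c) \<times> 'd, ('b \<times> 'c) \<times> 'd) sf).
       loop c (loop d s) \<sim>\<^sub>s\<^sub>f loop (c, d) (comp (arr unassoc) (comp s (arr assoc))))"
  by (simp add: bisim_refl comp_arr_id_left comp_arr_id_right comp_assoc arr_compose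
      comp_first_arr_fst comp_first_arr_map_prod_id comp_first_first_arr_assoc first_arr
      first_comp loop_comp_first_left loop_comp_first_right loop_loop)

end
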